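(* Let $H(x,p)=\frac12(H_{11}p^2+2H_{12}px+H_{22}x^2)$ with real coefficients, $H_{11}\neq0$ and $H_{11}H_{22}-H_{12}^2<0$. Let $f(p,x)=\beta xp+\frac\gamma2x^2$ with $$\beta=\tfrac12\log|H_{11}|,\qquad\gamma=\frac{H_{12}}{H_{11}}\frac{\beta}{\sinh\beta}e^{\beta}.$$ Then $$\exp(X_f)H=\frac12\frac{H_{11}}{|H_{11}|}\left(p^2+\det(\mathrm{Hess}(H))\,x^2\right),$$ where $\det(\mathrm{Hess}(H))=H_{11}H_{22}-H_{12}^2$.
   Context: On $\mathbb R^2$ with coordinates $(x,p)$, the Hamiltonian vector field of $f$ is $X_f=\frac{\partial f}{\partial p}\partial_x-\frac{\partial f}{\partial x}\partial_p$ (here $X_f=\beta x\partial_x-(\beta p+\gamma x)\partial_p$). For a function $g$, $\exp(sX_f)g$ denotes $g\circ\Phi_s$ where $\Phi_s$ is the time-$s$ flow of $X_f$; $\exp(X_f)g$ is the case $s=1$. *)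

theory Defs
  imports "HOL-Analysis.Analysis"
begin

text \<open>Points of the plane are pairs (x, p). Hamiltonian vector field
  X_f = (df/dp) d_x - (df/dx) d_p, written as the map z |-> (dx/dt, dp/dt).\<close>
definition ham_vf :: "(real \<times> real \<Rightarrow> real) \<Rightarrow> real \<times> real \<Rightarrow> real \<times> real" where
  "ham_vf f z = (deriv (\<lambda>q. f (fst z, q)) (snd z), - deriv (\<lambda>y. f (y, snd z)) (fst z))"

definition is_flow :: "(real \<times> real \<Rightarrow> real \<times> real) \<Rightarrow> (real \<Rightarrow> real \<times> real \<Rightarrow> real \<times> real) \<Rightarrow> bool" where
  "is_flow V \<Phi> \<longleftrightarrow> (\<forall>z. \<Phi> 0 z = z) \<and>
     (\<forall>z s. ((\<lambda>t. \<Phi> t z) has_vector_derivative V (\<Phi> s z)) (at s))"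

definition flow_of :: "(real \<times> real \<Rightarrow> real \<times> real) \<Rightarrow> real \<Rightarrow> real \<times> real \<Rightarrow> real \<times> real" where
  "flow_of V = (SOME \<Phi>. is_flow V \<Phi>)"

definition exp_ham :: "real \<Rightarrow> (real \<times> real \<Rightarrow> real) \<Rightarrow> (real \<times> real \<Rightarrow> real) \<Rightarrow> real \<times> real \<Rightarrow> real" where
  "exp_ham s f g = g \<circ> flow_of (ham_vf f) s"

definition b_over_sinh :: "real \<Rightarrow> real" where
  "b_over_sinh b = (if b = 0 then 1 else b / sinh b)"

end

theory Submission
  imports Defs
begin

text \<open>Since f is a quadratic form, X_f is linear: x' = \<beta> x, p' = -(\<beta> p + \<gamma> x).
  Its flow is explicit, x(t) = x e^(\<beta> t) and p(t) = e^(-\<beta> t) (p - \<gamma> x E(t)) with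
  E(t) the integral of e^(2 \<beta> s) over [0, t], and it is the only flow by uniqueness for
  the scalar equation y' = c y. At time 1 the choice of \<gamma> turns the shear into
  p - (H12 / H11) e^(2 \<beta>) x, which completes the square in H and removes the cross term,
  while the scaling by e^\<beta> = sqrt |H11| normalises the coefficient of p^2 to sgn H11.\<close>

lemma DERIV_linear_imp_exp:
  fixes y :: "real \<Rightarrow> real"
  assumes "\<And>t. (y has_real_derivative c * y t) (at t)"
  shows "y t = y 0 * exp (c * t)"
proof -
  have "((\<lambda>t. y t * exp (- c * t)) has_real_derivative 0) (at s)" for s
    using assms[of s] by (auto intro!: derivative_eq_intros simp: algebra_simps)
  from DERIV_isconst_all[OF allI[OF this], of t 0]
  have "y t * exp (- c * t) * exp (c * t) = y 0 * exp (c * t)" by simp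
  then show ?thesis by (simp add: mult.assoc flip: exp_add)
qed

lemma has_real_derivative_fst:
  "(u has_vector_derivative v) F \<Longrightarrow> ((\<lambda>t. fst (u t)) has_real_derivative fst v) F"
  using bounded_linear.has_vector_derivative[OF bounded_linear_fst]
  by (simp add: has_real_derivative_iff_has_vector_derivative)

lemma has_real_derivative_snd:
  "(u has_vector_derivative v) F \<Longrightarrow> ((\<lambda>t. snd (u t)) has_real_derivative snd v) F"
  using bounded_linear.has_vector_derivative[OF bounded_linear_snd]
  by (simp add: has_real_derivative_iff_has_vector_derivative)

definition exp2_primitive :: "real \<Rightarrow> real \<Rightarrow> real" where
  "exp2_primitive b t = (if b = 0 then t else (exp (2 * b * t) - 1) / (2 * b))"

lemma exp2_primitive_0 [simp]: "exp2_primitive b 0 = 0"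
  by (simp add: exp2_primitive_def)

lemma exp2_primitive_deriv: "(exp2_primitive b has_real_derivative exp (2 * b * t)) (at t)"
proof (cases "b = 0")
  case True
  then have "exp2_primitive b = (\<lambda>t. t)" by (simp add: fun_eq_iff exp2_primitive_def)
  then show ?thesis using True by simp
next
  case False
  have "((\<lambda>t. (exp (2 * b * t) - 1) / (2 * b)) has_real_derivative exp (2 * b * t)) (at t)"
    using False by (auto intro!: derivative_eq_intros)
  then show ?thesis using False unfolding exp2_primitive_def by simp
qed

lemma b_over_sinh_exp2_primitive:
  "b_over_sinh b * exp b * exp2_primitive b 1 = exp (2 * b)"
proof (cases "b = 0")
  case False
  define u where "u = exp b"
  have "u > 0" "u * u \<noteq> 1"
    using False by (simp_all add: u_def flip: exp_add)
  have "sinh b = (u * u - 1) / (2 * u)" "exp (2 * b) = u * u"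
    using \<open>u > 0\<close> by (simp_all add: u_def sinh_def exp_minus field_simps flip: exp_add)
  with \<open>u > 0\<close> \<open>u * u \<noteq> 1\<close> False show ?thesis
    by (simp add: b_over_sinh_def exp2_primitive_def u_def[symmetric])
qed (simp add: b_over_sinh_def exp2_primitive_def)

definition quadratic_flow :: "real \<Rightarrow> real \<Rightarrow> real \<Rightarrow> real \<times> real \<Rightarrow> real \<times> real" where
  "quadratic_flow b g t z =
     (fst z * exp (b * t), exp (- b * t) * (snd z - g * fst z * exp2_primitive b t))"

lemma ham_vf_quadratic:
  "ham_vf (\<lambda>(x, p). b * x * p + g / 2 * x\<^sup>2) z = (b * fst z, - (b * snd z + g * fst z))"
proof -
  have "((\<lambda>q. b * fst z * q + g / 2 * (fst z)\<^sup>2) has_real_derivative b * fst z) (at (snd z))"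
    and "((\<lambda>y. b * y * snd z + g / 2 * y\<^sup>2) has_real_derivative b * snd z + g * fst z) (at (fst z))"
    by (auto intro!: derivative_eq_intros)
  then show ?thesis unfolding ham_vf_def by (simp add: DERIV_imp_deriv)
qed

lemma is_flow_quadratic_flow:
  "is_flow (ham_vf (\<lambda>(x, p). b * x * p + g / 2 * x\<^sup>2)) (quadratic_flow b g)"
  unfolding is_flow_def ham_vf_quadratic
proof safe
  fix z show "quadratic_flow b g 0 z = z" by (simp add: quadratic_flow_def)
next
  fix z :: "real \<times> real" and s :: real
  obtain x p where z: "z = (x, p)" by (cases z)
  have dx: "((\<lambda>t. x * exp (b * t)) has_real_derivative b * (x * exp (b * s))) (at s)"
    by (auto intro!: derivative_eq_intros)
  have "exp (- b * s) * exp (2 * b * s) = exp (b * s)"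
    by (simp flip: exp_add)
  then have dp: "((\<lambda>t. exp (- b * t) * (p - g * x * exp2_primitive b t)) has_real_derivative
      - (b * (exp (- b * s) * (p - g * x * exp2_primitive b s)) + g * (x * exp (b * s)))) (at s)"
    by (auto intro!: derivative_eq_intros exp2_primitive_deriv simp: algebra_simps)
  from dx dp show "((\<lambda>t. quadratic_flow b g t z) has_vector_derivative
      (b * fst (quadratic_flow b g s z),
       - (b * snd (quadratic_flow b g s z) + g * fst (quadratic_flow b g s z)))) (at s)"
    unfolding quadratic_flow_def z fst_conv snd_conv has_real_derivative_iff_has_vector_derivative
    by (rule has_vector_derivative_Pair)
qed

lemma is_flow_quadratic_unique:
  assumes "is_flow (ham_vf (\<lambda>(x, p). b * x * p + g / 2 * x\<^sup>2)) \<Phi>"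
  shows "\<Phi> = quadratic_flow b g"
proof (intro ext)
  fix t z
  let ?\<Psi> = "quadratic_flow b g"
  have "\<Phi> 0 z = z"
    using assms unfolding is_flow_def by blast
  then have init: "\<Phi> 0 z = ?\<Psi> 0 z"
    by (simp add: quadratic_flow_def)
  have "\<And>s. ((\<lambda>t. \<Phi> t z) has_vector_derivative
      (b * fst (\<Phi> s z), - (b * snd (\<Phi> s z) + g * fst (\<Phi> s z)))) (at s)"
    "\<And>s. ((\<lambda>t. ?\<Psi> t z) has_vector_derivative
      (b * fst (?\<Psi> s z), - (b * snd (?\<Psi> s z) + g * fst (?\<Psi> s z)))) (at s)"
    using assms is_flow_quadratic_flow unfolding is_flow_def ham_vf_quadratic by blast+
  note derivs = this[THEN has_real_derivative_fst, unfolded fst_conv]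
    this[THEN has_real_derivative_snd, unfolded snd_conv]
  have fst_eq: "fst (\<Phi> s z) = fst (?\<Psi> s z)" for s
    using DERIV_linear_imp_exp[OF derivs(1), of s] DERIV_linear_imp_exp[OF derivs(2), of s] init
    by simp
  have "((\<lambda>t. snd (\<Phi> t z) - snd (?\<Psi> t z)) has_real_derivative
      - b * (snd (\<Phi> s z) - snd (?\<Psi> s z))) (at s)" for s
    using DERIV_diff[OF derivs(3) derivs(4), of s] fst_eq[of s] by (simp add: algebra_simps)
  from DERIV_linear_imp_exp[OF this, of t] init
  have "snd (\<Phi> t z) = snd (?\<Psi> t z)" by simp
  with fst_eq[of t] show "\<Phi> t z = ?\<Psi> t z" by (simp add: prod_eq_iff)
qed

lemma exp_ham_quadratic:
  "exp_ham s (\<lambda>(x, p). b * x * p + g / 2 * x\<^sup>2) h (x, p) =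
     h (x * exp (b * s), exp (- b * s) * (p - g * exp2_primitive b s * x))"
proof -
  have "flow_of (ham_vf (\<lambda>(x, p). b * x * p + g / 2 * x\<^sup>2)) = quadratic_flow b g"
    unfolding flow_of_def
    by (rule someI2[of _ "quadratic_flow b g"])
      (fact is_flow_quadratic_flow, rule is_flow_quadratic_unique)
  then show ?thesis by (simp add: exp_ham_def quadratic_flow_def ac_simps)
qed

lemma complete_square:
  fixes a b c :: "'a :: field"
  assumes "a \<noteq> 0"
  shows "a * P\<^sup>2 + 2 * b * P * X + c * X\<^sup>2 = a * (P + b / a * X)\<^sup>2 + (a * c - b\<^sup>2) / a * X\<^sup>2"
  using assms by (simp add: field_simps power2_eq_square)

lemma quadratic_form_shear_scale:
  fixes a b c u x p :: real
  assumes "a \<noteq> 0" "u > 0" "u * u = \<bar>a\<bar>"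
  defines "P \<equiv> (p - b / a * (u * u) * x) / u"
  shows "(a * P\<^sup>2 + 2 * b * P * (x * u) + c * (x * u)\<^sup>2) / 2 =
    a / \<bar>a\<bar> * (p\<^sup>2 + (a * c - b\<^sup>2) * x\<^sup>2) / 2"
proof -
  have "P + b / a * (x * u) = p / u"
    using assms(2) by (simp add: P_def field_simps)
  then have "a * P\<^sup>2 + 2 * b * P * (x * u) + c * (x * u)\<^sup>2 =
      a * (p / u)\<^sup>2 + (a * c - b\<^sup>2) / a * (x * u)\<^sup>2"
    by (simp add: complete_square[OF assms(1)])
  also have "\<dots> = a / \<bar>a\<bar> * p\<^sup>2 + \<bar>a\<bar> / a * (a * c - b\<^sup>2) * x\<^sup>2"
    using assms(3) by (simp add: power_divide power_mult_distrib power2_eq_square[of u])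
  also have "\<bar>a\<bar> / a = a / \<bar>a\<bar>"
    using assms(1) by (simp add: abs_if)
  finally show ?thesis by (simp add: distrib_left mult.assoc)
qed

theorem lemma4p5:
  fixes H11 H12 H22 :: real
  assumes "H11 \<noteq> 0" and "H11 * H22 - H12\<^sup>2 < 0"
  defines "\<beta> \<equiv> ln \<bar>H11\<bar> / 2"
  defines "\<gamma> \<equiv> H12 / H11 * b_over_sinh \<beta> * exp \<beta>"
  defines "H \<equiv> (\<lambda>(x, p). (H11 * p\<^sup>2 + 2 * H12 * p * x + H22 * x\<^sup>2) / 2)"
  defines "f \<equiv> (\<lambda>(x, p). \<beta> * x * p + \<gamma> / 2 * x\<^sup>2)"
  shows "exp_ham 1 f H =
    (\<lambda>(x, p). (H11 / \<bar>H11\<bar>) * (p\<^sup>2 + (H11 * H22 - H12\<^sup>2) * x\<^sup>2) / 2)"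
proof (intro ext, clarify)
  fix x p
  define u where "u = exp \<beta>"
  have "u > 0" by (simp add: u_def)
  have u_sq: "u * u = \<bar>H11\<bar>"
    using assms(1) by (simp add: u_def \<beta>_def flip: exp_add)
  have shear: "\<gamma> * exp2_primitive \<beta> 1 = H12 / H11 * (u * u)"
    using b_over_sinh_exp2_primitive[of \<beta>]
    by (simp add: \<gamma>_def u_def mult.assoc flip: exp_add)
  have "exp_ham 1 f H (x, p) = H (x * u, (p - \<gamma> * exp2_primitive \<beta> 1 * x) / u)"
    unfolding f_def exp_ham_quadratic by (simp add: u_def exp_minus divide_inverse mult.commute)
  also have "\<dots> = H (x * u, (p - H12 / H11 * (u * u) * x) / u)"
    unfolding shear ..
  also have "\<dots> = (H11 / \<bar>H11\<bar>) * (p\<^sup>2 + (H11 * H22 - H12\<^sup>2) * x\<^sup>2) / 2"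
    unfolding H_def prod.case by (rule quadratic_form_shear_scale[OF assms(1) \<open>u > 0\<close> u_sq])
  finally show "exp_ham 1 f H (x, p) = (H11 / \<bar>H11\<bar>) * (p\<^sup>2 + (H11 * H22 - H12\<^sup>2) * x\<^sup>2) / 2" .
qed

end
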